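(* Let $G$ be a finite inverse semigroup acting by endomorphisms on the left of a locally finite inverse semigroup $A$, and let $I$ be the $\lambda$-semidirect product of $G$ acting on $A$. Then $I$ is locally finite. Moreover, if $\sigma:\mathbb{N}\to\mathbb{N}$ is non-decreasing and every $k$-generated subsemigroup of $A$ has cardinality at most $\sigma(k)$ (for all $k$), then every $m$-generated subsemigroup of $I$ has cardinality at most $|G|\,\sigma(m|G|)$. *)

theory Defs
  imports Main
begin

definition semigroup_on :: "'a set \<Rightarrow> ('a \<Rightarrow> 'a \<Rightarrow> 'a) \<Rightarrow> bool" where
  "semigroup_on S f \<longleftrightarrow>
     (\<forall>x\<in>S. \<forall>y\<in>S. f x y \<in> S) \<and>
     (\<forall>x\<in>S. \<forall>y\<in>S. \<forall>z\<in>S. f (f x y) z = f x (f y z))"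

definition inverse_semigroup_on :: "'a set \<Rightarrow> ('a \<Rightarrow> 'a \<Rightarrow> 'a) \<Rightarrow> bool" where
  "inverse_semigroup_on S f \<longleftrightarrow> semigroup_on S f \<and>
     (\<forall>a\<in>S. \<exists>!b. b \<in> S \<and> f (f a b) a = a \<and> f (f b a) b = b)"

definition sinv :: "'a set \<Rightarrow> ('a \<Rightarrow> 'a \<Rightarrow> 'a) \<Rightarrow> 'a \<Rightarrow> 'a" where
  "sinv S f a = (THE b. b \<in> S \<and> f (f a b) a = a \<and> f (f b a) b = b)"

inductive_set sg_gen :: "('a \<Rightarrow> 'a \<Rightarrow> 'a) \<Rightarrow> 'a set \<Rightarrow> 'a set"
  for f :: "'a \<Rightarrow> 'a \<Rightarrow> 'a" and X :: "'a set" where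
  gen_base: "x \<in> X \<Longrightarrow> x \<in> sg_gen f X"
| gen_mult: "x \<in> sg_gen f X \<Longrightarrow> y \<in> sg_gen f X \<Longrightarrow> f x y \<in> sg_gen f X"

definition locally_finite_on :: "'a set \<Rightarrow> ('a \<Rightarrow> 'a \<Rightarrow> 'a) \<Rightarrow> bool" where
  "locally_finite_on S f \<longleftrightarrow> (\<forall>X. X \<subseteq> S \<and> finite X \<longrightarrow> finite (sg_gen f X))"

definition acts_by_endos ::
  "'g set \<Rightarrow> ('g \<Rightarrow> 'g \<Rightarrow> 'g) \<Rightarrow> 'a set \<Rightarrow> ('a \<Rightarrow> 'a \<Rightarrow> 'a) \<Rightarrow> ('g \<Rightarrow> 'a \<Rightarrow> 'a) \<Rightarrow> bool" where
  "acts_by_endos G g A f act \<longleftrightarrow>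
     (\<forall>x\<in>G. \<forall>a\<in>A. act x a \<in> A) \<and>
     (\<forall>x\<in>G. \<forall>a\<in>A. \<forall>b\<in>A. act x (f a b) = f (act x a) (act x b)) \<and>
     (\<forall>x\<in>G. \<forall>y\<in>G. \<forall>a\<in>A. act (g x y) a = act x (act y a))"

text \<open>The lambda-semidirect product (Billhardt):
  carrier {(a,x). x x^{-1} . a = a}, product (a,x)(b,y) = (((xy)(xy)^{-1} . a)(x . b), xy).\<close>
definition lsd_carrier ::
  "'g set \<Rightarrow> ('g \<Rightarrow> 'g \<Rightarrow> 'g) \<Rightarrow> 'a set \<Rightarrow> ('g \<Rightarrow> 'a \<Rightarrow> 'a) \<Rightarrow> ('a \<times> 'g) set" where
  "lsd_carrier G g A act = {(a, x). a \<in> A \<and> x \<in> G \<and> act (g x (sinv G g x)) a = a}"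

definition lsd_mult ::
  "'g set \<Rightarrow> ('g \<Rightarrow> 'g \<Rightarrow> 'g) \<Rightarrow> ('a \<Rightarrow> 'a \<Rightarrow> 'a) \<Rightarrow> ('g \<Rightarrow> 'a \<Rightarrow> 'a)
     \<Rightarrow> ('a \<times> 'g) \<Rightarrow> ('a \<times> 'g) \<Rightarrow> ('a \<times> 'g)" where
  "lsd_mult G g f act p q =
     (let a = fst p; x = snd p; b = fst q; y = snd q; xy = g x y
      in (f (act (g xy (sinv G g xy)) a) (act x b), xy))"

end

theory Submission
  imports Defs
begin

text \<open>Write \<open>X\<close> for the set of all \<open>z \<cdot> a\<close> with \<open>z \<in> G\<close> and \<open>(a, x) \<in> Y\<close>. It is closed under
  the action and has at most \<open>|G| |Y|\<close> elements. Each generator \<open>(a, x)\<close> has \<open>a = x x\<^sup>-\<^sup>1 \<cdot> a \<in> X\<close>,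
  and the first component of a product \<open>(a, x)(b, y)\<close> is a product of translates of \<open>a\<close> and \<open>b\<close>
  under the action, so the subsemigroup of the \<open>\<lambda>\<close>-semidirect product generated by \<open>Y\<close> lies in
  \<open>\<langle>X\<rangle> \<times> G\<close>. Both claims follow, the bound being \<open>|\<langle>X\<rangle>| |G| \<le> \<sigma>(m |G|) |G|\<close>.\<close>

lemma sinv_mem:
  assumes "inverse_semigroup_on G g" "x \<in> G"
  shows "sinv G g x \<in> G"
proof -
  have "\<exists>!b. b \<in> G \<and> g (g x b) x = x \<and> g (g b x) b = b"
    using assms unfolding inverse_semigroup_on_def by blast
  from theI'[OF this] show ?thesis unfolding sinv_def by blast
qed

lemma sg_gen_subset:
  assumes "semigroup_on A f" "X \<subseteq> A"
  shows "sg_gen f X \<subseteq> A"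
proof
  fix a assume "a \<in> sg_gen f X"
  then show "a \<in> A"
    by induction (use assms in \<open>auto simp: semigroup_on_def\<close>)
qed

lemma sg_gen_endo_closed:
  assumes "semigroup_on A f" "X \<subseteq> A"
    and endo: "\<forall>a\<in>A. \<forall>b\<in>A. h (f a b) = f (h a) (h b)"
    and "h ` X \<subseteq> X"
    and "a \<in> sg_gen f X"
  shows "h a \<in> sg_gen f X"
  using \<open>a \<in> sg_gen f X\<close>
proof induction
  case (gen_base x)
  then show ?case using \<open>h ` X \<subseteq> X\<close> by (auto intro: sg_gen.gen_base)
next
  case (gen_mult x y)
  have "x \<in> A" "y \<in> A" using gen_mult sg_gen_subset[OF assms(1,2)] by auto
  then have "h (f x y) = f (h x) (h y)" using endo by blast
  then show ?case using gen_mult by (auto intro: sg_gen.gen_mult)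
qed

definition orbit_fst :: "'g set \<Rightarrow> ('g \<Rightarrow> 'a \<Rightarrow> 'a) \<Rightarrow> ('a \<times> 'g) set \<Rightarrow> 'a set" where
  "orbit_fst G act Y = (\<lambda>(z, p). act z (fst p)) ` (G \<times> Y)"

context
  fixes G :: "'g set" and g :: "'g \<Rightarrow> 'g \<Rightarrow> 'g"
    and A :: "'a set" and f :: "'a \<Rightarrow> 'a \<Rightarrow> 'a"
    and act :: "'g \<Rightarrow> 'a \<Rightarrow> 'a"
  assumes iG: "inverse_semigroup_on G g"
    and sA: "semigroup_on A f"
    and act: "acts_by_endos G g A f act"
begin

private lemma semigroup_G: "semigroup_on G g"
  using iG unfolding inverse_semigroup_on_def by blast

private lemma mult_mem: "x \<in> G \<Longrightarrow> y \<in> G \<Longrightarrow> g x y \<in> G"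
  using semigroup_G unfolding semigroup_on_def by blast

private lemma idempotent_mem: "x \<in> G \<Longrightarrow> g x (sinv G g x) \<in> G"
  using mult_mem sinv_mem[OF iG] by blast

lemma orbit_fst_subset:
  assumes "Y \<subseteq> lsd_carrier G g A act"
  shows "orbit_fst G act Y \<subseteq> A"
  using assms act unfolding orbit_fst_def lsd_carrier_def acts_by_endos_def by fastforce

lemma orbit_fst_act_closed:
  assumes "Y \<subseteq> lsd_carrier G g A act" "z \<in> G"
  shows "act z ` orbit_fst G act Y \<subseteq> orbit_fst G act Y"
proof
  fix c assume "c \<in> act z ` orbit_fst G act Y"
  then obtain w p where wp: "w \<in> G" "p \<in> Y" and c: "c = act z (act w (fst p))"
    unfolding orbit_fst_def by auto
  have "fst p \<in> A" using wp assms(1) unfolding lsd_carrier_def by auto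
  then have "c = act (g z w) (fst p)"
    using c act assms(2) wp(1) unfolding acts_by_endos_def by auto
  then show "c \<in> orbit_fst G act Y"
    using mult_mem[OF assms(2) wp(1)] wp(2) unfolding orbit_fst_def
    by (intro image_eqI[where x="(g z w, p)"]) auto
qed

lemma sg_gen_lsd_subset:
  assumes Y: "Y \<subseteq> lsd_carrier G g A act"
  shows "sg_gen (lsd_mult G g f act) Y \<subseteq> sg_gen f (orbit_fst G act Y) \<times> G"
proof
  let ?X = "orbit_fst G act Y"
  have translate: "act z a \<in> sg_gen f ?X" if "z \<in> G" "a \<in> sg_gen f ?X" for z a
  proof (rule sg_gen_endo_closed[OF sA orbit_fst_subset[OF Y] _ _ that(2)])
    show "\<forall>a\<in>A. \<forall>b\<in>A. act z (f a b) = f (act z a) (act z b)"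
      using act that(1) unfolding acts_by_endos_def by blast
  qed (rule orbit_fst_act_closed[OF Y that(1)])
  fix q assume "q \<in> sg_gen (lsd_mult G g f act) Y"
  then show "q \<in> sg_gen f ?X \<times> G"
  proof induction
    case (gen_base q)
    obtain a x where q: "q = (a, x)" by force
    have x: "x \<in> G" and a: "act (g x (sinv G g x)) a = a"
      using gen_base Y q unfolding lsd_carrier_def by auto
    have "a \<in> ?X" using idempotent_mem[OF x] a gen_base q unfolding orbit_fst_def
      by (intro image_eqI[where x="(g x (sinv G g x), (a, x))"]) auto
    then show ?case using q x by (auto intro: sg_gen.gen_base)
  next
    case (gen_mult p q)
    obtain a x b y where pq: "p = (a, x)" "q = (b, y)" by force
    have "a \<in> sg_gen f ?X" "x \<in> G" "b \<in> sg_gen f ?X" "y \<in> G"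
      using gen_mult pq by auto
    moreover have "lsd_mult G g f act p q
        = (f (act (g (g x y) (sinv G g (g x y))) a) (act x b), g x y)"
      unfolding lsd_mult_def pq by (simp add: Let_def)
    ultimately show ?case
      using translate idempotent_mem mult_mem by (auto intro: sg_gen.gen_mult)
  qed
qed

end

lemma card_orbit_fst_le:
  assumes "finite G" "finite Y"
  shows "card (orbit_fst G act Y) \<le> card G * card Y"
  unfolding orbit_fst_def
  using card_image_le[OF finite_cartesian_product[OF assms]] by (simp add: card_cartesian_product)

lemma finite_orbit_fst:
  "finite G \<Longrightarrow> finite Y \<Longrightarrow> finite (orbit_fst G act Y)"
  unfolding orbit_fst_def by simp

lemma lsd_locally_finite:
  assumes "inverse_semigroup_on G g" "finite G"
    and "semigroup_on A f" "locally_finite_on A f"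
    and "acts_by_endos G g A f act"
  shows "locally_finite_on (lsd_carrier G g A act) (lsd_mult G g f act)"
  unfolding locally_finite_on_def
proof (intro allI impI, elim conjE)
  fix Y assume Y: "Y \<subseteq> lsd_carrier G g A act" "finite Y"
  have "finite (sg_gen f (orbit_fst G act Y))"
    using assms(4) orbit_fst_subset[OF assms(1,3,5) Y(1)] finite_orbit_fst[OF assms(2) Y(2)]
    unfolding locally_finite_on_def by blast
  then show "finite (sg_gen (lsd_mult G g f act) Y)"
    using assms(2) sg_gen_lsd_subset[OF assms(1,3,5) Y(1)] by (auto intro: finite_subset)
qed

lemma lsd_card_sg_gen_le:
  assumes "inverse_semigroup_on G g" "finite G"
    and "semigroup_on A f" "acts_by_endos G g A f act"
    and growth: "\<And>X. X \<subseteq> A \<Longrightarrow> finite X \<Longrightarrow> card X \<le> m * card G \<Longrightarrow>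
        finite (sg_gen f X) \<and> card (sg_gen f X) \<le> s"
    and Y: "Y \<subseteq> lsd_carrier G g A act" "finite Y" "card Y \<le> m"
  shows "finite (sg_gen (lsd_mult G g f act) Y) \<and> card (sg_gen (lsd_mult G g f act) Y) \<le> card G * s"
proof -
  let ?X = "orbit_fst G act Y"
  have "card ?X \<le> m * card G"
    using card_orbit_fst_le[OF assms(2) Y(2), of act] Y(3)
    by (metis le_trans mult.commute mult_le_mono2)
  then have X: "finite (sg_gen f ?X)" "card (sg_gen f ?X) \<le> s"
    using growth orbit_fst_subset[OF assms(1,3,4) Y(1)] finite_orbit_fst[OF assms(2) Y(2)] by auto
  have sub: "sg_gen (lsd_mult G g f act) Y \<subseteq> sg_gen f ?X \<times> G"
    by (rule sg_gen_lsd_subset[OF assms(1,3,4) Y(1)])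
  have fin: "finite (sg_gen f ?X \<times> G)" using X(1) assms(2) by simp
  have "card (sg_gen (lsd_mult G g f act) Y) \<le> card (sg_gen f ?X) * card G"
    using card_mono[OF fin sub] by (simp add: card_cartesian_product)
  also have "\<dots> \<le> card G * s" using X(2) by (simp add: mult.commute)
  finally show ?thesis using finite_subset[OF sub fin] by blast
qed

theorem theorem2:
  fixes G :: "'g set" and g :: "'g \<Rightarrow> 'g \<Rightarrow> 'g"
    and A :: "'a set" and f :: "'a \<Rightarrow> 'a \<Rightarrow> 'a"
    and act :: "'g \<Rightarrow> 'a \<Rightarrow> 'a"
  assumes "inverse_semigroup_on G g" and "finite G"
    and "inverse_semigroup_on A f" and "locally_finite_on A f"
    and "acts_by_endos G g A f act"
  shows "locally_finite_on (lsd_carrier G g A act) (lsd_mult G g f act)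
    \<and> (\<forall>\<sigma> :: nat \<Rightarrow> nat. mono \<sigma> \<longrightarrow>
         (\<forall>k X. X \<subseteq> A \<and> finite X \<and> card X \<le> k \<longrightarrow>
              finite (sg_gen f X) \<and> card (sg_gen f X) \<le> \<sigma> k) \<longrightarrow>
         (\<forall>m Y. Y \<subseteq> lsd_carrier G g A act \<and> finite Y \<and> card Y \<le> m \<longrightarrow>
              finite (sg_gen (lsd_mult G g f act) Y) \<and>
              card (sg_gen (lsd_mult G g f act) Y) \<le> card G * \<sigma> (m * card G)))"
proof -
  have sA: "semigroup_on A f" using assms(3) unfolding inverse_semigroup_on_def by blast
  show ?thesis
  proof (rule conjI)
    show "locally_finite_on (lsd_carrier G g A act) (lsd_mult G g f act)"
      using lsd_locally_finite[OF assms(1,2) sA assms(4,5)] .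
  next
    show "\<forall>\<sigma> :: nat \<Rightarrow> nat. mono \<sigma> \<longrightarrow>
         (\<forall>k X. X \<subseteq> A \<and> finite X \<and> card X \<le> k \<longrightarrow>
              finite (sg_gen f X) \<and> card (sg_gen f X) \<le> \<sigma> k) \<longrightarrow>
         (\<forall>m Y. Y \<subseteq> lsd_carrier G g A act \<and> finite Y \<and> card Y \<le> m \<longrightarrow>
              finite (sg_gen (lsd_mult G g f act) Y) \<and>
              card (sg_gen (lsd_mult G g f act) Y) \<le> card G * \<sigma> (m * card G))"
    proof (intro allI impI)
      fix \<sigma> :: "nat \<Rightarrow> nat" and m Y
      assume growth: "\<forall>k X. X \<subseteq> A \<and> finite X \<and> card X \<le> k \<longrightarrow>
          finite (sg_gen f X) \<and> card (sg_gen f X) \<le> \<sigma> k"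
        and Y: "Y \<subseteq> lsd_carrier G g A act \<and> finite Y \<and> card Y \<le> m"
      show "finite (sg_gen (lsd_mult G g f act) Y) \<and>
          card (sg_gen (lsd_mult G g f act) Y) \<le> card G * \<sigma> (m * card G)"
        using Y growth by (intro lsd_card_sg_gen_le[OF assms(1,2) sA assms(5)]) auto
    qed
  qed
qed

end
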